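(* In the public bug bounty model described in the context, let $\kappa_a(\overline v)$ be the largest fixed point in $[0,\infty)$ of $\hat\kappa\mapsto\overline v\,\frac{1-e^{-\hat\kappa}}{\underline c}$. Then $\kappa_a(\overline v)$ is increasing in $\overline v$ and $K(\overline v)=[0,\kappa_a(\overline v)]$, where $$K(\overline v)=\Big\{\hat\kappa:\ \hat\kappa=\Psi_\infty(\hat\kappa;\boldsymbol v,v_a,q_a),\ \sum_lv^l+v_a\le\overline v,\ v^l\ge0,\ v_a\ge0,\ q_a\in[0,1]\Big\}$$ and $\Psi_\infty(\hat\kappa;\boldsymbol v,v_a,q_a)=\sum_lv^l\mu^l\frac{1-e^{-q^l\hat\kappa}}{\underline c}+v_a\frac{1-e^{-q_a\hat\kappa}}{\underline c}$.
   Context: There are $L$ potential organic bugs; bug $l$ exists with probability $\mu^l\in(0,1]$ and has complexity $q^l\in(0,1]$. $\underline c>0$ is the lower end of the support of the agents' cost distribution. The designer has budget $\overline v>0$ with $\overline v\ge\underline c$, sets prizes $v^l\ge0$ for organic bugs, and one artificial bug with prize $v_a\ge0$ and complexity $q_a\in[0,1]$. *)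

theory Defs
  imports Complex_Main
begin

definition kappa_a :: "real \<Rightarrow> real \<Rightarrow> real" where
  "kappa_a c vbar = (GREATEST k. k \<ge> 0 \<and> k = vbar * (1 - exp (- k)) / c)"

definition Psi_inf :: "nat \<Rightarrow> (nat \<Rightarrow> real) \<Rightarrow> (nat \<Rightarrow> real) \<Rightarrow> real
    \<Rightarrow> real \<Rightarrow> (nat \<Rightarrow> real) \<Rightarrow> real \<Rightarrow> real \<Rightarrow> real" where
  "Psi_inf L mu q c k v va qa =
     (\<Sum>l<L. v l * mu l * (1 - exp (- q l * k)) / c) + va * (1 - exp (- qa * k)) / c"

definition K_set :: "nat \<Rightarrow> (nat \<Rightarrow> real) \<Rightarrow> (nat \<Rightarrow> real) \<Rightarrow> real \<Rightarrow> real \<Rightarrow> real set" where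
  "K_set L mu q c vbar =
     {k. k \<ge> 0 \<and> (\<exists>v va qa. k = Psi_inf L mu q c k v va qa
          \<and> (\<Sum>l<L. v l) + va \<le> vbar \<and> (\<forall>l<L. v l \<ge> 0) \<and> va \<ge> 0
          \<and> qa \<in> {0..1})}"

end

theory Submission
  imports Defs
begin

text \<open>
  Write \<open>f k = 1 - exp (- k)\<close>. Since \<open>f\<close> is strictly concave with \<open>f 0 = 0\<close>, the slope
  \<open>f k / k\<close> is strictly decreasing on \<open>k > 0\<close>. Hence for \<open>a \<ge> 1\<close> the set of \<open>k \<ge> 0\<close> with
  \<open>k \<le> a f k\<close> is an interval \<open>[0, \<kappa>]\<close> whose right end is the largest fixed point of
  \<open>a f\<close>, and \<open>\<kappa>\<close> grows strictly with \<open>a\<close>. Every term of \<open>\<Psi>\<^sub>\<infinity>\<close> is at most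
  \<open>v f k / c\<close> for the prize \<open>v\<close> it carries, so a fixed point of \<open>\<Psi>\<^sub>\<infinity>\<close> satisfies
  \<open>k \<le> (vbar / c) f k\<close>; conversely every \<open>k \<in> [0, \<kappa>]\<close> is the fixed point obtained by putting
  the prize \<open>c k / f k \<le> vbar\<close> on an artificial bug of complexity 1.
\<close>

lemma add_one_less_exp:
  fixes x :: real
  assumes "x \<noteq> 0"
  shows "1 + x < exp x"
proof (cases "1 + x / 2 \<le> 0")
  case True
  then show ?thesis using exp_gt_zero[of x] by linarith
next
  case False
  have "0 < x * x" using assms by (metis not_real_square_gt_zero)
  then have "1 + x < (1 + x / 2)\<^sup>2"
    by (simp add: power2_eq_square field_simps)
  also have "\<dots> \<le> (exp (x / 2))\<^sup>2"
    using False by (intro power_mono) auto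
  also have "\<dots> = exp x"
    by (simp flip: exp_double)
  finally show ?thesis .
qed

lemma one_minus_exp_slope_strict_decreasing:
  fixes x y :: real
  assumes "0 < x" "x < y"
  shows "x * (1 - exp (- y)) < y * (1 - exp (- x))"
proof -
  define d where "d = y - x"
  have "d > 0" using assms by (simp add: d_def)
  have split: "1 - exp (- y) = (1 - exp (- x)) + exp (- x) * (1 - exp (- d))"
    by (simp add: d_def algebra_simps flip: exp_add)
  have "x * exp (- x) * (1 - exp (- d)) < x * exp (- x) * d"
    using add_one_less_exp[of "- d"] \<open>d > 0\<close> assms by (intro mult_strict_left_mono) auto
  also have "\<dots> < (1 - exp (- x)) * d"
  proof -
    have "x * exp (- x) < (exp x - 1) * exp (- x)"
      using add_one_less_exp[of x] assms by (intro mult_strict_right_mono) auto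
    also have "\<dots> = 1 - exp (- x)"
      by (simp add: algebra_simps flip: exp_add)
    finally show ?thesis using \<open>d > 0\<close> by (intro mult_strict_right_mono)
  qed
  finally show ?thesis
    by (simp add: split d_def algebra_simps)
qed

lemma le_positive_fixed_point_iff:
  fixes a k \<kappa> :: real
  assumes "0 < \<kappa>" and fixed: "\<kappa> = a * (1 - exp (- \<kappa>))" and "0 < k"
  shows "k \<le> a * (1 - exp (- k)) \<longleftrightarrow> k \<le> \<kappa>"
proof -
  have "0 < 1 - exp (- \<kappa>)" using \<open>0 < \<kappa>\<close> by simp
  moreover have "0 < a * (1 - exp (- \<kappa>))" using \<open>0 < \<kappa>\<close> fixed by linarith
  ultimately have "0 < a" by (simp add: zero_less_mult_iff)
  have "k \<le> a * (1 - exp (- k)) \<longleftrightarrow> k * \<kappa> \<le> a * (1 - exp (- k)) * \<kappa>"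
    using \<open>0 < \<kappa>\<close> by simp
  also have "\<dots> \<longleftrightarrow> a * (k * (1 - exp (- \<kappa>))) \<le> a * (\<kappa> * (1 - exp (- k)))"
    by (subst (1) fixed) (simp add: algebra_simps)
  also have "\<dots> \<longleftrightarrow> k * (1 - exp (- \<kappa>)) \<le> \<kappa> * (1 - exp (- k))"
    using \<open>0 < a\<close> by simp
  also have "\<dots> \<longleftrightarrow> k \<le> \<kappa>"
    using one_minus_exp_slope_strict_decreasing[of k \<kappa>]
      one_minus_exp_slope_strict_decreasing[of \<kappa> k] \<open>0 < k\<close> \<open>0 < \<kappa>\<close>
    by (cases k \<kappa> rule: linorder_cases) auto
  finally show ?thesis .
qed

lemma greatest_fixed_point_one_minus_exp:
  fixes a :: real
  assumes "1 \<le> a"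
  obtains \<kappa> where "ln a \<le> \<kappa>" "\<kappa> = a * (1 - exp (- \<kappa>))"
    "\<And>k. 0 \<le> k \<Longrightarrow> k \<le> a * (1 - exp (- k)) \<longleftrightarrow> k \<le> \<kappa>"
proof (cases "a = 1")
  case True
  have "\<not> k \<le> 1 - exp (- k)" if "0 < k" for k :: real
    using add_one_less_exp[of "- k"] that by simp
  then have "k \<le> a * (1 - exp (- k)) \<longleftrightarrow> k \<le> 0" if "0 \<le> k" for k
    using that True by force
  with True show thesis by (intro that[of 0]) auto
next
  case False
  define h where "h k = a * (1 - exp (- k)) - k" for k
  have "0 < ln a" using assms False by simp
  have "ln a \<le> a - 1" using assms by (intro ln_le_minus_one) simp
  then have "0 \<le> h (ln a)" using assms by (simp add: h_def right_diff_distrib exp_minus)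
  moreover have "h a \<le> 0" using assms by (simp add: h_def algebra_simps)
  moreover have "ln a \<le> a" using \<open>ln a \<le> a - 1\<close> by simp
  moreover have "\<forall>x. ln a \<le> x \<and> x \<le> a \<longrightarrow> isCont h x"
    unfolding h_def by (auto intro!: continuous_intros)
  ultimately obtain \<kappa> where "ln a \<le> \<kappa>" "h \<kappa> = 0"
    using IVT2[of h a 0 "ln a"] by blast
  then have "0 < \<kappa>" and fixed: "\<kappa> = a * (1 - exp (- \<kappa>))"
    using \<open>0 < ln a\<close> by (auto simp: h_def)
  have "k \<le> a * (1 - exp (- k)) \<longleftrightarrow> k \<le> \<kappa>" if "0 \<le> k" for k
    using le_positive_fixed_point_iff[OF \<open>0 < \<kappa>\<close> fixed, of k] that \<open>0 < \<kappa>\<close>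
    by (cases "k = 0") auto
  with \<open>ln a \<le> \<kappa>\<close> fixed show thesis by (intro that) auto
qed

lemma kappa_a_spec:
  assumes "0 < c" "c \<le> v"
  shows "ln (v / c) \<le> kappa_a c v"
    and "kappa_a c v = v * (1 - exp (- kappa_a c v)) / c"
    and "\<And>k. 0 \<le> k \<Longrightarrow> k \<le> v * (1 - exp (- k)) / c \<longleftrightarrow> k \<le> kappa_a c v"
proof -
  have "1 \<le> v / c" using assms by simp
  then obtain \<kappa> where \<kappa>: "ln (v / c) \<le> \<kappa>" "\<kappa> = v / c * (1 - exp (- \<kappa>))"
    and le_iff: "\<And>k. 0 \<le> k \<Longrightarrow> k \<le> v / c * (1 - exp (- k)) \<longleftrightarrow> k \<le> \<kappa>"
    by (elim greatest_fixed_point_one_minus_exp) blast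
  have "0 \<le> \<kappa>" using \<kappa>(1) \<open>1 \<le> v / c\<close> by (smt (verit) ln_ge_zero)
  have "kappa_a c v = \<kappa>"
    unfolding kappa_a_def
  proof (rule Greatest_equality)
    show "0 \<le> \<kappa> \<and> \<kappa> = v * (1 - exp (- \<kappa>)) / c" using \<open>0 \<le> \<kappa>\<close> \<kappa>(2) by simp
  next
    fix k assume "0 \<le> k \<and> k = v * (1 - exp (- k)) / c"
    then show "k \<le> \<kappa>" using le_iff[of k] by (metis times_divide_eq_left order_refl)
  qed
  with \<kappa> le_iff show "ln (v / c) \<le> kappa_a c v"
    and "kappa_a c v = v * (1 - exp (- kappa_a c v)) / c"
    and "\<And>k. 0 \<le> k \<Longrightarrow> k \<le> v * (1 - exp (- k)) / c \<longleftrightarrow> k \<le> kappa_a c v"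
    by auto
qed

lemma kappa_a_nonneg:
  assumes "0 < c" "c \<le> v"
  shows "0 \<le> kappa_a c v"
  using kappa_a_spec(1)[OF assms] assms by (smt (verit) ln_ge_zero le_divide_eq_1_pos)

lemma strict_mono_on_kappa_a:
  assumes "0 < c"
  shows "strict_mono_on {c..} (kappa_a c)"
proof (rule strict_mono_onI)
  fix v w assume "v \<in> {c..}" "w \<in> {c..}" "v < w"
  then have "c \<le> v" "c \<le> w" by auto
  define k where "k = kappa_a c v"
  show "kappa_a c v < kappa_a c w"
  proof (cases "k = 0")
    case True
    have "0 < ln (w / c)" using assms \<open>c \<le> v\<close> \<open>v < w\<close> by simp
    with True show ?thesis using kappa_a_spec(1)[OF assms \<open>c \<le> w\<close>] by (simp add: k_def)
  next
    case False
    then have "0 < k" using kappa_a_nonneg[OF assms \<open>c \<le> v\<close>] by (simp add: k_def)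
    then have "v * (1 - exp (- k)) / c < w * (1 - exp (- k)) / c"
      using \<open>v < w\<close> assms by (intro divide_strict_right_mono mult_strict_right_mono) auto
    then have "k < w * (1 - exp (- k)) / c"
      using kappa_a_spec(2)[OF assms \<open>c \<le> v\<close>] by (simp add: k_def)
    moreover from this have "k \<le> kappa_a c w"
      using kappa_a_spec(3)[OF assms \<open>c \<le> w\<close>, of k] \<open>0 < k\<close> by simp
    moreover have "k \<noteq> kappa_a c w"
      using kappa_a_spec(2)[OF assms \<open>c \<le> w\<close>] calculation by auto
    ultimately show ?thesis by (simp add: k_def)
  qed
qed

lemma mult_one_minus_exp_le:
  fixes m q k :: real
  assumes "0 \<le> m" "m \<le> 1" "0 \<le> q" "q \<le> 1" "0 \<le> k"
  shows "m * (1 - exp (- q * k)) \<le> 1 - exp (- k)"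
proof -
  have "0 \<le> 1 - exp (- q * k)" using assms by simp
  moreover have "q * k \<le> k" using assms by (simp add: mult_left_le_one_le)
  then have "1 - exp (- q * k) \<le> 1 - exp (- k)" by simp
  ultimately show ?thesis using assms by (smt (verit) mult_left_le_one_le)
qed

lemma Psi_inf_le:
  assumes mu: "\<forall>l<L. 0 \<le> mu l \<and> mu l \<le> 1" and q: "\<forall>l<L. 0 \<le> q l \<and> q l \<le> 1"
    and "0 < c" "0 \<le> k" and v: "\<forall>l<L. 0 \<le> v l" and "0 \<le> va" and "qa \<in> {0..1}"
  shows "Psi_inf L mu q c k v va qa \<le> ((\<Sum>l<L. v l) + va) * (1 - exp (- k)) / c"
proof -
  have "v l * mu l * (1 - exp (- q l * k)) / c \<le> v l * (1 - exp (- k)) / c" if "l < L" for l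
    using mult_one_minus_exp_le[of "mu l" "q l" k] mu q v that \<open>0 < c\<close> \<open>0 \<le> k\<close>
    by (simp add: divide_right_mono mult_left_mono mult.assoc)
  then have "(\<Sum>l<L. v l * mu l * (1 - exp (- q l * k)) / c) \<le> (\<Sum>l<L. v l * (1 - exp (- k)) / c)"
    by (intro sum_mono) simp
  moreover have "va * (1 - exp (- qa * k)) / c \<le> va * (1 - exp (- k)) / c"
    using mult_one_minus_exp_le[of 1 qa k] assms by (simp add: divide_right_mono mult_left_mono)
  ultimately show ?thesis
    by (simp add: Psi_inf_def sum_divide_distrib[symmetric] sum_distrib_right[symmetric]
        add_divide_distrib distrib_right)
qed

lemma K_set_subset:
  assumes mu: "\<forall>l<L. 0 \<le> mu l \<and> mu l \<le> 1" and q: "\<forall>l<L. 0 \<le> q l \<and> q l \<le> 1"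
    and "0 < c" "c \<le> vbar"
  shows "K_set L mu q c vbar \<subseteq> {0..kappa_a c vbar}"
proof
  fix k assume "k \<in> K_set L mu q c vbar"
  then obtain v va qa where "0 \<le> k" and k: "k = Psi_inf L mu q c k v va qa"
    and budget: "(\<Sum>l<L. v l) + va \<le> vbar"
    and "\<forall>l<L. 0 \<le> v l" "0 \<le> va" "qa \<in> {0..1}"
    unfolding K_set_def by auto
  then have "k \<le> ((\<Sum>l<L. v l) + va) * (1 - exp (- k)) / c"
    using Psi_inf_le[OF mu q \<open>0 < c\<close>] by metis
  also have "\<dots> \<le> vbar * (1 - exp (- k)) / c"
    using budget \<open>0 \<le> k\<close> \<open>0 < c\<close> by (simp add: divide_right_mono mult_right_mono)
  finally show "k \<in> {0..kappa_a c vbar}"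
    using kappa_a_spec(3)[OF \<open>0 < c\<close> \<open>c \<le> vbar\<close>] \<open>0 \<le> k\<close> by simp
qed

lemma kappa_a_interval_subset_K_set:
  assumes "0 < c" "c \<le> vbar"
  shows "{0..kappa_a c vbar} \<subseteq> K_set L mu q c vbar"
proof
  fix k assume k: "k \<in> {0..kappa_a c vbar}"
  show "k \<in> K_set L mu q c vbar"
  proof (cases "k = 0")
    case True
    then show ?thesis using assms unfolding K_set_def Psi_inf_def
      by (intro CollectI conjI exI[of _ "\<lambda>_. 0"] exI[of _ 0]) auto
  next
    case False
    then have "0 < k" using k by simp
    define f where "f = 1 - exp (- k)"
    have "0 < f" using \<open>0 < k\<close> by (simp add: f_def)
    define va where "va = c * k / f"
    have "k \<le> vbar * f / c" using kappa_a_spec(3)[OF assms] k by (simp add: f_def)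
    then have "va \<le> vbar" using \<open>0 < f\<close> assms by (simp add: va_def field_simps)
    moreover have "0 \<le> va" using assms \<open>0 < k\<close> \<open>0 < f\<close> by (simp add: va_def)
    moreover have "k = Psi_inf L mu q c k (\<lambda>_. 0) va 1"
      using assms \<open>0 < f\<close> by (simp add: Psi_inf_def va_def flip: f_def)
    ultimately show ?thesis unfolding K_set_def using \<open>0 < k\<close>
      by (intro CollectI conjI exI[of _ "\<lambda>_. 0"] exI[of _ va] exI[of _ 1]) auto
  qed
qed

theorem lemma6:
  fixes L :: nat and mu q :: "nat \<Rightarrow> real" and c vbar :: real
  assumes mu: "\<forall>l<L. 0 < mu l \<and> mu l \<le> 1"
    and q: "\<forall>l<L. 0 < q l \<and> q l \<le> 1"
    and c: "c > 0"
    and vbar: "vbar \<ge> c"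
  shows "strict_mono_on {c..} (kappa_a c) \<and> K_set L mu q c vbar = {0..kappa_a c vbar}"
proof
  show "strict_mono_on {c..} (kappa_a c)"
    using c by (rule strict_mono_on_kappa_a)
  have "\<forall>l<L. 0 \<le> mu l \<and> mu l \<le> 1" "\<forall>l<L. 0 \<le> q l \<and> q l \<le> 1"
    using mu q by auto
  then show "K_set L mu q c vbar = {0..kappa_a c vbar}"
    using K_set_subset kappa_a_interval_subset_K_set c vbar by (metis subset_antisym)
qed

end
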